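(* Let $(H_n)_{n\ge1}$ be symmetric positive-definite random $d\times d$ matrices with $\|H_n\|_2\le1$ a.s., $\gamma_n=Cn^{-\alpha}$ with $C>0$, $\alpha\in(\frac12,1)$, and $X_0\in\mathbb R^{d\times k}$ with $X_0^\top X_0=I_k$. Let either $X_n=R_{X_{n-1}}\big(\gamma_n(I-X_{n-1}X_{n-1}^\top)H_nX_{n-1}\big)$ for all $n$ (Riemannian SGD), or $X_n=R_{X_{n-1}}(\gamma_nH_nX_{n-1})$ for all $n$ (randomized power method). In both cases there is a constant $c>0$ such that almost surely, for all $n\ge1$, $$\big\|X_n-X_{n-1}-\gamma_n(I-X_{n-1}X_{n-1}^\top)H_nX_{n-1}\big\|_F\le c\,\gamma_n^2,$$ i.e. both updates coincide with the Oja update $X_{n-1}+\gamma_n(I-X_{n-1}X_{n-1}^\top)H_nX_{n-1}$ up to $O(\gamma_n^2)$.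
   Context: $R_X(V)=(X+V)[(X+V)^\top(X+V)]^{-1/2}$ for $X\in\mathbb R^{d\times k}$ with $X^\top X=I_k$ and $V\in\mathbb R^{d\times k}$ (the projection-like retraction on the Grassmann manifold of $k$-dimensional subspaces of $\mathbb R^d$, represented by orthonormal $d\times k$ matrices). *)

theory Defs
  imports "HOL-Probability.Probability"
begin

text \<open>Matrices are Cartesian-product types: a d x k matrix is real^'k^'d.
  The norm of such a matrix (the L2 norm of its entries) is the Frobenius norm.\<close>

definition sym_mat :: "real^'n^'n \<Rightarrow> bool" where
  "sym_mat A \<longleftrightarrow> transpose A = A"

definition pos_def_mat :: "real^'n^'n \<Rightarrow> bool" where
  "pos_def_mat A \<longleftrightarrow> sym_mat A \<and> (\<forall>x. x \<noteq> 0 \<longrightarrow> x \<bullet> (A *v x) > 0)"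

definition spec_norm :: "real^'n^'m \<Rightarrow> real" where
  "spec_norm A = onorm (\<lambda>x. A *v x)"

definition frob_norm :: "real^'n^'m \<Rightarrow> real" where
  "frob_norm A = sqrt (\<Sum>i\<in>UNIV. \<Sum>j\<in>UNIV. (A $ i $ j)\<^sup>2)"

text \<open>Symmetric positive-definite square root (unique when A is positive definite).\<close>
definition mat_sqrt :: "real^'n^'n \<Rightarrow> real^'n^'n" where
  "mat_sqrt A = (THE B. pos_def_mat B \<and> B ** B = A)"

definition mat_inv_sqrt :: "real^'n^'n \<Rightarrow> real^'n^'n" where
  "mat_inv_sqrt A = matrix_inv (mat_sqrt A)"

definition retr :: "real^'k^'d \<Rightarrow> real^'k^'d \<Rightarrow> real^'k^'d" where
  "retr X V = (X + V) ** mat_inv_sqrt (transpose (X + V) ** (X + V))"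

end

theory Submission
  imports Defs
begin

text \<open>Write \<open>R\<^sub>X(gY) = (X + gY) G\<^sup>-\<^sup>1\<^sup>/\<^sup>2\<close> with
  \<open>G = (X + gY)\<^sup>T(X + gY) = 1 + 2gA + g\<^sup>2Y\<^sup>TY\<close>, where \<open>A\<close> is the symmetric part of \<open>X\<^sup>TY\<close>.
  If \<open>A\<close> is positive semidefinite then \<open>G \<ge> 1\<close>, so \<open>G\<close> has a positive definite square root
  (a Banach fixed point), the retraction is again orthonormal, and
  \<open>G\<^sup>-\<^sup>1\<^sup>/\<^sup>2 = 1 - gA + O(g\<^sup>2)\<close>, whence \<open>R\<^sub>X(gY) = X + g(Y - XA) + O(g\<^sup>2)\<close>.
  For Riemannian SGD, \<open>Y = (1 - XX\<^sup>T)HX\<close> and \<open>A = 0\<close>; for the power method, \<open>Y = HX\<close> and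
  \<open>A = X\<^sup>THX \<ge> 0\<close>; in both cases \<open>Y - XA = (1 - XX\<^sup>T)HX\<close>. As every iterate is orthonormal
  and \<open>\<parallel>H\<parallel> \<le> 1\<close>, the constant in \<open>O(g\<^sup>2)\<close> depends only on \<open>k\<close> and \<open>C \<ge> \<gamma>\<^sub>n\<close>.\<close>

lemma matrix_add_rdistrib: "((A::'a::semiring_1^'n^'m) + B) ** C = A ** C + B ** C"
  by (vector matrix_matrix_mult_def sum.distrib[symmetric] field_simps)

lemma matrix_diff_rdistrib: "((A::'a::ring_1^'n^'m) - B) ** C = A ** C - B ** C"
  by (vector matrix_matrix_mult_def sum_subtractf[symmetric] field_simps)

lemma matrix_diff_ldistrib: "(A::'a::ring_1^'n^'m) ** (B - C) = A ** B - A ** C"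
  by (vector matrix_matrix_mult_def sum_subtractf[symmetric] field_simps)

lemma matrix_mult_scaleR_left: "(c *\<^sub>R (A::real^'n^'m)) ** B = c *\<^sub>R (A ** B)"
  by (simp add: scalar_matrix_assoc)

lemma matrix_mult_scaleR_right: "(A::real^'n^'m) ** (c *\<^sub>R B) = c *\<^sub>R (A ** B)"
  by (simp add: matrix_scalar_ac scalar_matrix_assoc)

lemma scaleR_matrix_vector_mult: "(c *\<^sub>R (A::real^'n^'m)) *v x = c *\<^sub>R (A *v x)"
  by (simp add: scaleR_matrix_vector_assoc)

lemma transpose_add: "transpose (A + B) = transpose A + transpose B"
  by (vector transpose_def)

lemma transpose_diff: "transpose ((A::'a::ab_group_add^'n^'m) - B) = transpose A - transpose B"
  by (vector transpose_def)

lemma transpose_zero [simp]: "transpose 0 = 0"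
  by (vector transpose_def)

lemmas matrix_arith_simps =
  matrix_add_ldistrib matrix_add_rdistrib matrix_diff_ldistrib matrix_diff_rdistrib
  matrix_mult_scaleR_left matrix_mult_scaleR_right
  transpose_add transpose_diff transpose_scalar matrix_transpose_mul

lemma inner_matrix_vector_mult: "inner ((A::real^'n^'m) *v x) y = inner x (transpose A *v y)"
  by (metis dot_lmul_matrix transpose_matrix_vector transpose_transpose)

lemma inner_vector_matrix_mult: "inner x ((x::real^'n) v* T) = inner x (T *v x)"
  by (metis dot_lmul_matrix inner_commute)

lemma power2_norm_vec: "(norm (x::'a::real_inner^'n))\<^sup>2 = (\<Sum>i\<in>UNIV. (norm (x$i))\<^sup>2)"
  by (simp add: power2_norm_eq_inner inner_vec_def)

lemma frob_norm_eq_norm: "frob_norm (A::real^'n^'m) = norm A"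
proof -
  have "(norm A)\<^sup>2 = (\<Sum>i\<in>UNIV. \<Sum>j\<in>UNIV. (A $ i $ j)\<^sup>2)"
    by (simp add: power2_norm_vec)
  then show ?thesis unfolding frob_norm_def by (metis norm_ge_zero real_sqrt_unique)
qed

lemma inner_transpose: "inner (transpose (A::real^'n^'m)) (transpose B) = inner A B"
  unfolding inner_vec_def transpose_def inner_real_def by (simp, subst sum.swap, simp)

lemma norm_transpose: "norm (transpose (A::real^'n^'m)) = norm A"
  by (simp add: norm_eq_sqrt_inner inner_transpose)

lemma norm_vector_matrix_mult_le: "norm ((x::real^'m) v* (B::real^'n^'m)) \<le> norm x * norm B"
proof -
  have "(x v* B) $ j = inner x (transpose B $ j)" for j
    by (simp add: vector_matrix_mult_def inner_vec_def transpose_def)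
  then have "(norm (x v* B))\<^sup>2 = (\<Sum>j\<in>UNIV. (inner x (transpose B $ j))\<^sup>2)"
    by (simp add: power2_norm_vec)
  also have "\<dots> \<le> (\<Sum>j\<in>UNIV. (norm x)\<^sup>2 * (norm (transpose B $ j))\<^sup>2)"
    by (intro sum_mono)
      (metis Cauchy_Schwarz_ineq2 abs_ge_zero power2_abs power_mono power_mult_distrib)
  also have "\<dots> = (norm x * norm B)\<^sup>2"
    by (simp add: power_mult_distrib norm_transpose sum_distrib_left[symmetric]
        power2_norm_vec[of "transpose B", symmetric])
  finally show ?thesis by (rule power2_le_imp_le) simp
qed

lemma norm_matrix_vector_mult_le: "norm ((A::real^'n^'m) *v x) \<le> norm A * norm x"
  using norm_vector_matrix_mult_le[of x "transpose A"]
  by (simp add: norm_transpose mult.commute)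

lemma norm_matrix_mult_le: "norm ((A::real^'n^'m) ** (B::real^'p^'n)) \<le> norm A * norm B"
proof -
  have "(norm (A ** B))\<^sup>2 = (\<Sum>i\<in>UNIV. (norm (A$i v* B))\<^sup>2)"
    by (simp add: power2_norm_vec matrix_matrix_mult_def vector_matrix_mult_def)
  also have "\<dots> \<le> (\<Sum>i\<in>UNIV. (norm (A$i))\<^sup>2 * (norm B)\<^sup>2)"
    by (intro sum_mono)
      (metis norm_ge_zero power_mono power_mult_distrib norm_vector_matrix_mult_le)
  also have "\<dots> = (norm A * norm B)\<^sup>2"
    by (simp add: sum_distrib_right[symmetric] power2_norm_vec[of A, symmetric] power_mult_distrib)
  finally show ?thesis by (rule power2_le_imp_le) simp
qed

lemma norm_matrix_mult_le_bounded_right: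
  assumes "\<And>x. norm (transpose (W::real^'n^'n) *v x) \<le> r * norm x" "0 \<le> r"
  shows "norm ((N::real^'n^'m) ** W) \<le> r * norm N"
proof -
  have "(norm (N ** W))\<^sup>2 = (\<Sum>i\<in>UNIV. (norm (transpose W *v (N$i)))\<^sup>2)"
    by (simp add: power2_norm_vec matrix_matrix_mult_def vector_matrix_mult_def)
  also have "\<dots> \<le> (\<Sum>i\<in>UNIV. r\<^sup>2 * (norm (N$i))\<^sup>2)"
    by (intro sum_mono) (metis assms(1) norm_ge_zero power_mono power_mult_distrib)
  also have "\<dots> = (r * norm N)\<^sup>2"
    by (simp add: sum_distrib_left[symmetric] power2_norm_vec[of N, symmetric] power_mult_distrib)
  finally show ?thesis by (rule power2_le_imp_le) (simp add: assms)
qed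

lemma norm_matrix_mult_le_bounded_left:
  assumes "\<And>x. norm ((Z::real^'n^'n) *v x) \<le> r * norm x" "0 \<le> r"
  shows "norm (Z ** (N::real^'m^'n)) \<le> r * norm N"
proof -
  have "norm (Z ** N) = norm (transpose N ** transpose Z)"
    by (simp add: norm_transpose flip: matrix_transpose_mul)
  also have "\<dots> \<le> r * norm (transpose N)"
    by (rule norm_matrix_mult_le_bounded_right) (simp_all add: assms)
  finally show ?thesis by (simp add: norm_transpose)
qed

lemma norm_matrix_vector_le_spec_norm: "norm ((H::real^'n^'m) *v x) \<le> spec_norm H * norm x"
  unfolding spec_norm_def by (rule onorm[OF matrix_vector_mul_bounded_linear])

lemma norm_orthonormal_columns:
  assumes "transpose (X::real^'k^'d) ** X = mat 1"
  shows "norm X = sqrt (real CARD('k))"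
proof -
  have column: "(\<Sum>i\<in>UNIV. (X $ i $ j)\<^sup>2) = 1" for j
  proof -
    have "(\<Sum>i\<in>UNIV. (X $ i $ j)\<^sup>2) = (transpose X ** X) $ j $ j"
      by (simp add: matrix_matrix_mult_def transpose_def power2_eq_square)
    then show ?thesis using assms by (simp add: mat_def)
  qed
  have "(norm X)\<^sup>2 = (\<Sum>i\<in>UNIV. \<Sum>j\<in>UNIV. (X $ i $ j)\<^sup>2)"
    by (simp add: power2_norm_vec)
  also have "\<dots> = (\<Sum>j\<in>UNIV. \<Sum>i\<in>UNIV. (X $ i $ j)\<^sup>2)"
    by (rule sum.swap)
  also have "\<dots> = real CARD('k)"
    by (simp add: column)
  finally show ?thesis by (metis norm_ge_zero real_sqrt_unique)
qed

lemma row_matrix_mult: "((A::real^'n^'m) ** B) $ i = A $ i v* B"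
  by (simp add: vec_eq_iff matrix_matrix_mult_def vector_matrix_mult_def)

lemma inner_matrix_mult_right:
  "inner (D::real^'n^'m) (D ** T) = (\<Sum>i\<in>UNIV. inner (D$i) (T *v (D$i)))"
  unfolding inner_vec_def[of D] row_matrix_mult inner_vector_matrix_mult ..

lemma inner_matrix_mult_left:
  "inner (D::real^'n^'m) (S ** D) = (\<Sum>j\<in>UNIV. inner (transpose D $ j) (S *v (transpose D $ j)))"
proof -
  have "inner D (S ** D) = inner (transpose D) (transpose D ** transpose S)"
    by (simp add: inner_transpose flip: matrix_transpose_mul)
  also have "\<dots> = (\<Sum>j\<in>UNIV. inner (transpose D $ j) (transpose S *v (transpose D $ j)))"
    by (rule inner_matrix_mult_right)
  also have "\<dots> = (\<Sum>j\<in>UNIV. inner (transpose D $ j) (S *v (transpose D $ j)))"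
    by (simp only: transpose_matrix_vector inner_vector_matrix_mult)
  finally show ?thesis .
qed

lemma inner_symmetric_matrix_vector:
  "transpose A = A \<Longrightarrow> inner ((A::real^'n^'n) *v x) y = inner x (A *v y)"
  using inner_matrix_vector_mult[of A x y] by simp

lemma discriminant_le_of_nonneg:
  fixes a b c :: real
  assumes "\<And>t. 0 \<le> a + 2*t*b + t\<^sup>2*c" "0 \<le> c"
  shows "b\<^sup>2 \<le> a * c"
proof (cases "c = 0")
  case True
  have "b = 0"
  proof (rule ccontr)
    assume "b \<noteq> 0"
    have "0 \<le> a + 2*(-(\<bar>a\<bar>+1)/(2*b))*b + (-(\<bar>a\<bar>+1)/(2*b))\<^sup>2*c" by (rule assms)
    moreover have "2*(-(\<bar>a\<bar>+1)/(2*b))*b = -(\<bar>a\<bar>+1)" using \<open>b \<noteq> 0\<close> by (simp add: field_simps)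
    ultimately show False using True by (simp del: minus_add_distrib)
  qed
  with True show ?thesis by simp
next
  case False
  with assms have c: "c > 0" by simp
  have "0 \<le> a + 2*(-b/c)*b + (-b/c)\<^sup>2*c" by (rule assms)
  also have "\<dots> = a - b\<^sup>2/c" using c by (simp add: field_simps power2_eq_square)
  finally show ?thesis using c by (simp add: field_simps mult.commute)
qed

lemma Cauchy_Schwarz_positive_semidefinite:
  assumes sym: "transpose B = B" and psd: "\<And>x. 0 \<le> inner x ((B::real^'n^'n) *v x)"
  shows "(inner u (B *v v))\<^sup>2 \<le> inner u (B *v u) * inner v (B *v v)"
proof (rule discriminant_le_of_nonneg)
  fix t :: real
  have "inner (u + t *\<^sub>R v) (B *v (u + t *\<^sub>R v)) =
      inner u (B *v u) + 2*t*inner u (B *v v) + t\<^sup>2 * inner v (B *v v)"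
    using inner_symmetric_matrix_vector[OF sym, of v u]
    by (simp add: matrix_vector_right_distrib matrix_vector_mult_scaleR inner_add_left
        inner_add_right power2_eq_square algebra_simps inner_commute)
  then show "0 \<le> inner u (B *v u) + 2*t*inner u (B *v v) + t\<^sup>2 * inner v (B *v v)"
    using psd[of "u + t *\<^sub>R v"] by simp
qed (rule psd)

lemma norm_matrix_vector_le_of_quadratic_form_le:
  assumes sym: "transpose B = B" and psd: "\<And>x. 0 \<le> inner x ((B::real^'n^'n) *v x)"
    and le: "\<And>x. inner x (B *v x) \<le> \<beta> * (norm x)\<^sup>2" and "0 \<le> \<beta>"
  shows "norm (B *v x) \<le> \<beta> * norm x"
proof -
  define y where "y = B *v x"
  have "((norm y)\<^sup>2)\<^sup>2 = (inner x (B *v y))\<^sup>2"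
    unfolding y_def power2_norm_eq_inner by (simp add: inner_symmetric_matrix_vector[OF sym])
  also have "\<dots> \<le> inner x (B *v x) * inner y (B *v y)"
    by (rule Cauchy_Schwarz_positive_semidefinite[OF sym psd])
  also have "\<dots> \<le> (\<beta> * (norm x)\<^sup>2) * (\<beta> * (norm y)\<^sup>2)"
    by (intro mult_mono le psd) (use \<open>0 \<le> \<beta>\<close> in simp)
  also have "\<dots> = (\<beta> * norm x * norm y)\<^sup>2" by (simp add: power2_eq_square)
  finally have "(norm y)\<^sup>2 \<le> \<beta> * norm x * norm y"
    by (rule power2_le_imp_le) (use \<open>0 \<le> \<beta>\<close> in simp)
  then have "norm y * norm y \<le> (\<beta> * norm x) * norm y"
    by (simp add: power2_eq_square mult_ac)
  then show ?thesis
    by (cases "norm y = 0") (use \<open>0 \<le> \<beta>\<close> y_def in auto)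
qed

section \<open>Matrix square roots\<close>

lemma closed_symmetric_matrices_bounded:
  "closed {Z::real^'n^'n. transpose Z = Z \<and> (\<forall>x. norm (Z *v x) \<le> r * norm x)}"
proof (intro closed_Collect_conj closed_Collect_all)
  have "bounded_linear (transpose :: real^'n^'n \<Rightarrow> real^'n^'n)"
    by (rule bounded_linear_intro[where K=1]) (simp_all add: transpose_add transpose_scalar norm_transpose)
  then show "closed {Z::real^'n^'n. transpose Z = Z}"
    by (intro closed_Collect_eq linear_continuous_on continuous_on_id)
  fix x :: "real^'n"
  have "bounded_linear (\<lambda>Z::real^'n^'n. Z *v x)"
    by (rule bounded_linear_intro[where K="norm x"])
      (simp_all add: matrix_vector_mult_add_rdistrib scaleR_matrix_vector_mult
        norm_matrix_vector_mult_le)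
  then show "closed {Z::real^'n^'n. norm (Z *v x) \<le> r * norm x}"
    by (intro closed_Collect_le continuous_on_norm linear_continuous_on continuous_on_const)
qed

lemma norm_half_square_le:
  assumes "\<And>x. norm (B *v x) \<le> \<beta> * norm x" and Z: "\<And>x. norm (Z *v x) \<le> r * norm x"
    and "0 \<le> r" "\<beta> + r * r = 2 * r"
  shows "norm ((1/2) *\<^sub>R (B + Z ** Z) *v x) \<le> r * norm (x::real^'n)"
proof -
  have "norm ((1/2) *\<^sub>R (B + Z ** Z) *v x) \<le> (1/2) * (norm (B *v x) + norm (Z *v (Z *v x)))"
    by (simp add: scaleR_matrix_vector_mult matrix_vector_mult_add_rdistrib
        matrix_vector_mul_assoc norm_triangle_ineq)
  also have "\<dots> \<le> (1/2) * (\<beta> * norm x + r * (r * norm x))"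
    using assms(1)[of x] Z[of "Z *v x"] mult_left_mono[OF Z[of x] \<open>0 \<le> r\<close>] by simp
  also have "\<dots> = (1/2) * ((\<beta> + r * r) * norm x)" by (simp add: algebra_simps)
  also have "\<dots> = r * norm x" using assms(4) by simp
  finally show ?thesis .
qed

lemma dist_half_square_le:
  fixes Z W :: "real^'n^'n"
  assumes Z: "\<And>x. norm (Z *v x) \<le> r * norm x"
    and W: "transpose W = W" "\<And>x. norm (W *v x) \<le> r * norm x" and "0 \<le> r"
  shows "dist ((1/2) *\<^sub>R (B + Z ** Z)) ((1/2) *\<^sub>R (B + W ** W)) \<le> r * dist Z W"
proof -
  have "(1/2) *\<^sub>R (B + Z ** Z) - (1/2) *\<^sub>R (B + W ** W) = (1/2) *\<^sub>R (Z ** (Z - W) + (Z - W) ** W)"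
    by (simp add: matrix_diff_ldistrib matrix_diff_rdistrib algebra_simps)
  then have "dist ((1/2) *\<^sub>R (B + Z ** Z)) ((1/2) *\<^sub>R (B + W ** W))
      \<le> (1/2) * (norm (Z ** (Z - W)) + norm ((Z - W) ** W))"
    by (simp add: dist_norm norm_triangle_ineq)
  also have "\<dots> \<le> (1/2) * (r * norm (Z - W) + r * norm (Z - W))"
    using norm_matrix_mult_le_bounded_left[OF Z \<open>0 \<le> r\<close>, of "Z - W"]
      norm_matrix_mult_le_bounded_right[of W r "Z - W"] W \<open>0 \<le> r\<close> by simp
  finally show ?thesis by (simp add: dist_norm)
qed

text \<open>If \<open>(1 - r)\<^sup>2 = 1 - \<beta>\<close>, then \<open>Z \<mapsto> (B + Z\<^sup>2) / 2\<close> is an \<open>r\<close>-contraction of the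
  symmetric matrices of operator norm at most \<open>r\<close>; its fixed point \<open>Z\<close> makes \<open>1 - Z\<close> a square
  root of \<open>1 - B\<close>.\<close>

lemma symmetric_fixpoint_half_square:
  fixes B :: "real^'n^'n"
  assumes sym: "transpose B = B" and bound: "\<And>x. norm (B *v x) \<le> \<beta> * norm x"
    and r: "0 \<le> r" "r < 1" "\<beta> + r * r = 2 * r"
  shows "\<exists>Z. transpose Z = Z \<and> (\<forall>x. norm (Z *v x) \<le> r * norm x) \<and> Z ** Z = 2 *\<^sub>R Z - B"
proof -
  define K where "K = {Z::real^'n^'n. transpose Z = Z \<and> (\<forall>x. norm (Z *v x) \<le> r * norm x)}"
  define f where "f Z = (1/2) *\<^sub>R (B + Z ** Z)" for Z :: "real^'n^'n"
  have "\<exists>!Z\<in>K. f Z = Z"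
  proof (rule Banach_fix)
    show "Topological_Spaces.complete K"
      unfolding K_def by (simp add: complete_eq_closed closed_symmetric_matrices_bounded)
    show "K \<noteq> {}" using r by (auto simp: K_def intro!: exI[of _ 0])
    show "f ` K \<subseteq> K"
      using norm_half_square_le[OF bound _ r(1) r(3)]
      by (auto simp: K_def f_def transpose_add transpose_scalar matrix_transpose_mul sym)
    show "dist (f Z) (f W) \<le> r * dist Z W" if "Z \<in> K" "W \<in> K" for Z W
      using that dist_half_square_le[of Z r W B] r(1) by (auto simp: K_def f_def)
  qed (use r in auto)
  then obtain Z where "Z \<in> K" and fixed: "f Z = Z" by blast
  have "2 *\<^sub>R f Z = B + Z ** Z" by (simp add: f_def)
  then have "Z ** Z = 2 *\<^sub>R Z - B" by (simp add: fixed algebra_simps)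
  with \<open>Z \<in> K\<close> show ?thesis by (auto simp: K_def)
qed

lemma pos_def_mat_symmetric: "pos_def_mat B \<Longrightarrow> transpose B = B"
  unfolding pos_def_mat_def sym_mat_def by simp

lemma pos_def_mat_nonneg: "pos_def_mat B \<Longrightarrow> 0 \<le> inner x ((B::real^'n^'n) *v x)"
  unfolding pos_def_mat_def by (cases "x = 0") (auto intro: less_imp_le)

lemma matrix_sqrt_one_minus_exists:
  fixes B :: "real^'n^'n"
  assumes sym: "transpose B = B" and psd: "\<And>x. 0 \<le> inner x (B *v x)"
    and le: "\<And>x. inner x (B *v x) \<le> \<beta> * (norm x)\<^sup>2" and \<beta>: "0 \<le> \<beta>" "\<beta> < 1"
  shows "\<exists>S. pos_def_mat S \<and> S ** S = mat 1 - B"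
proof -
  define r where "r = 1 - sqrt (1 - \<beta>)"
  have "sqrt (1 - \<beta>) * sqrt (1 - \<beta>) = 1 - \<beta>"
    using \<beta> by simp
  then have r: "0 \<le> r" "r < 1" "\<beta> + r * r = 2 * r"
    using \<beta> by (auto simp: r_def algebra_simps)
  obtain Z where Z: "transpose Z = Z" "\<And>x. norm (Z *v x) \<le> r * norm x" "Z ** Z = 2 *\<^sub>R Z - B"
    using symmetric_fixpoint_half_square[OF sym
        norm_matrix_vector_le_of_quadratic_form_le[OF sym psd le \<beta>(1)] r] by blast
  have "(mat 1 - Z) ** (mat 1 - Z) = mat 1 - B"
    by (simp add: matrix_diff_ldistrib matrix_diff_rdistrib Z(3) algebra_simps scaleR_2)
  moreover have "pos_def_mat (mat 1 - Z)"
    unfolding pos_def_mat_def sym_mat_def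
  proof (intro conjI allI impI)
    show "transpose (mat 1 - Z) = mat 1 - Z" by (simp add: transpose_diff Z(1))
    fix x :: "real^'n" assume "x \<noteq> 0"
    have "inner x (Z *v x) \<le> norm x * norm (Z *v x)" by (rule Cauchy_Schwarz_ineq2[THEN abs_le_D1])
    also have "\<dots> \<le> norm x * (r * norm x)" by (intro mult_left_mono Z(2)) simp
    also have "\<dots> < norm x * norm x"
      using \<open>x \<noteq> 0\<close> r(2) by (simp add: mult_less_cancel_left_pos)
    finally show "0 < inner x ((mat 1 - Z) *v x)"
      by (simp add: matrix_vector_mult_diff_rdistrib inner_diff_right norm_eq_sqrt_inner)
  qed
  ultimately show ?thesis by blast
qed

text \<open>Rescaling by \<open>M > norm G\<close> reduces to \<open>matrix_sqrt_one_minus_exists\<close> with \<open>B = 1 - G / M\<close>.\<close>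

lemma matrix_sqrt_exists:
  fixes G :: "real^'n^'n"
  assumes sym: "transpose G = G" and ge: "\<And>x. (norm x)\<^sup>2 \<le> inner x (G *v x)"
  shows "\<exists>S. pos_def_mat S \<and> S ** S = G"
proof -
  define M where "M = norm G + 1"
  have M: "1 \<le> M" by (simp add: M_def)
  define B where "B = mat 1 - (1/M) *\<^sub>R G"
  have form_B: "inner x (B *v x) = (norm x)\<^sup>2 - inner x (G *v x) / M" for x
    by (simp add: B_def matrix_vector_mult_diff_rdistrib scaleR_matrix_vector_mult
        inner_diff_right power2_norm_eq_inner)
  have "inner x (G *v x) \<le> M * (norm x)\<^sup>2" for x
  proof -
    have "inner x (G *v x) \<le> norm x * (norm G * norm x)"
      by (rule order_trans[OF Cauchy_Schwarz_ineq2[THEN abs_le_D1]])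
        (simp add: mult_left_mono norm_matrix_vector_mult_le)
    also have "\<dots> \<le> M * (norm x)\<^sup>2" by (simp add: M_def power2_eq_square algebra_simps)
    finally show ?thesis .
  qed
  then have "0 \<le> inner x (B *v x)" for x
    using M by (simp add: form_B field_simps)
  moreover have "inner x (B *v x) \<le> (1 - 1/M) * (norm x)\<^sup>2" for x
    using ge[of x] M by (simp add: form_B field_simps)
  moreover have "transpose B = B"
    by (simp add: B_def transpose_diff transpose_scalar sym)
  ultimately have "\<exists>S. pos_def_mat S \<and> S ** S = mat 1 - B"
    using M by (intro matrix_sqrt_one_minus_exists[where \<beta>="1 - 1/M"]) auto
  then obtain S where S: "pos_def_mat S" "S ** S = (1/M) *\<^sub>R G" by (auto simp: B_def)
  have "pos_def_mat (sqrt M *\<^sub>R S)"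
    using S(1) M by (auto simp: pos_def_mat_def sym_mat_def transpose_scalar scaleR_matrix_vector_mult)
  moreover have "(sqrt M *\<^sub>R S) ** (sqrt M *\<^sub>R S) = G"
    using M by (simp add: matrix_mult_scaleR_left matrix_mult_scaleR_right S(2) flip: real_sqrt_mult)
  ultimately show ?thesis by blast
qed

lemma matrix_sqrt_unique:
  fixes S T :: "real^'n^'n"
  assumes S: "pos_def_mat S" and T: "pos_def_mat T" and eq: "S ** S = T ** T"
  shows "S = T"
proof -
  define D where "D = S - T"
  have "S ** D + D ** T = 0"
    using eq by (simp add: D_def matrix_diff_ldistrib matrix_diff_rdistrib)
  then have "inner D (S ** D) + inner D (D ** T) = 0"
    by (simp flip: inner_add_right)
  moreover have "0 \<le> inner D (S ** D)"
    unfolding inner_matrix_mult_left by (intro sum_nonneg pos_def_mat_nonneg[OF S])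
  moreover have "0 \<le> inner D (D ** T)"
    unfolding inner_matrix_mult_right by (intro sum_nonneg pos_def_mat_nonneg[OF T])
  ultimately have "inner D (D ** T) = 0" by linarith
  then have "\<forall>i\<in>UNIV. inner (D$i) (T *v (D$i)) = 0"
    unfolding inner_matrix_mult_right
    by (subst (asm) sum_nonneg_eq_0_iff) (auto intro: pos_def_mat_nonneg[OF T])
  then have "\<forall>i. D$i = 0"
    using T unfolding pos_def_mat_def by (metis UNIV_I less_irrefl)
  then show ?thesis by (simp add: D_def vec_eq_iff)
qed

context
  fixes G :: "real^'n^'n"
  assumes sym: "transpose G = G" and ge: "\<And>x. (norm x)\<^sup>2 \<le> inner x (G *v x)"
begin

lemma mat_sqrt: "pos_def_mat (mat_sqrt G)" "mat_sqrt G ** mat_sqrt G = G"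
proof -
  obtain S where S: "pos_def_mat S" "S ** S = G" using matrix_sqrt_exists[OF sym ge] by blast
  have "\<exists>!S. pos_def_mat S \<and> S ** S = G"
    using S matrix_sqrt_unique by (intro ex1I[of _ S]) auto
  then have "pos_def_mat (mat_sqrt G) \<and> mat_sqrt G ** mat_sqrt G = G"
    unfolding mat_sqrt_def by (rule theI')
  then show "pos_def_mat (mat_sqrt G)" "mat_sqrt G ** mat_sqrt G = G" by auto
qed

lemma norm_le_norm_mat_sqrt: "norm x \<le> norm (mat_sqrt G *v x)"
proof -
  have "(norm (mat_sqrt G *v x))\<^sup>2 = inner x (G *v x)"
    by (simp add: power2_norm_eq_inner matrix_vector_mul_assoc mat_sqrt(2)
        inner_symmetric_matrix_vector[OF pos_def_mat_symmetric[OF mat_sqrt(1)]])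
  then show ?thesis using ge[of x] by (simp add: power2_le_imp_le)
qed

lemma mat_inv_sqrt_inverse:
  "mat_sqrt G ** mat_inv_sqrt G = mat 1" "mat_inv_sqrt G ** mat_sqrt G = mat 1"
proof -
  have "invertible (mat_sqrt G)"
    using norm_le_norm_mat_sqrt
    by (simp add: invertible_left_inverse matrix_left_invertible_ker)
       (metis norm_le_zero_iff norm_zero)
  then have "mat_sqrt G ** mat_inv_sqrt G = mat 1 \<and> mat_inv_sqrt G ** mat_sqrt G = mat 1"
    unfolding invertible_def mat_inv_sqrt_def matrix_inv_def by (rule someI_ex)
  then show "mat_sqrt G ** mat_inv_sqrt G = mat 1" "mat_inv_sqrt G ** mat_sqrt G = mat 1"
    by auto
qed

lemma mat_inv_sqrt_symmetric: "transpose (mat_inv_sqrt G) = mat_inv_sqrt G"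
proof -
  let ?S = "mat_sqrt G" and ?R = "mat_inv_sqrt G"
  have "transpose ?R ** ?S = mat 1"
    using arg_cong[OF mat_inv_sqrt_inverse(1), of transpose]
    by (simp add: matrix_transpose_mul pos_def_mat_symmetric[OF mat_sqrt(1)])
  then have "transpose ?R = transpose ?R ** (?S ** ?R)"
    by (simp add: mat_inv_sqrt_inverse)
  also have "\<dots> = ?R"
    by (simp add: matrix_mul_assoc \<open>transpose ?R ** ?S = mat 1\<close>)
  finally show ?thesis .
qed

lemma norm_mat_inv_sqrt_le: "norm (mat_inv_sqrt G *v x) \<le> norm x"
  using norm_le_norm_mat_sqrt[of "mat_inv_sqrt G *v x"]
  by (simp add: matrix_vector_mul_assoc mat_inv_sqrt_inverse)

lemma mat_inv_sqrt_congruence: "mat_inv_sqrt G ** G ** mat_inv_sqrt G = mat 1"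
proof -
  have "mat_inv_sqrt G ** G ** mat_inv_sqrt G
      = mat_inv_sqrt G ** (mat_sqrt G ** mat_sqrt G) ** mat_inv_sqrt G"
    by (simp only: mat_sqrt(2))
  also have "\<dots> = (mat_inv_sqrt G ** mat_sqrt G) ** (mat_sqrt G ** mat_inv_sqrt G)"
    by (simp add: matrix_mul_assoc)
  finally show ?thesis by (simp add: mat_inv_sqrt_inverse)
qed

end

section \<open>First-order expansion of the retraction\<close>

lemma norm_sub_le_of_square_sub:
  fixes S T :: "real^'n^'n"
  assumes S: "pos_def_mat S" and T: "\<And>x. (norm x)\<^sup>2 \<le> inner x (T *v x)"
  shows "norm (S - T) \<le> norm (S ** S - T ** T)"
proof -
  define D where "D = S - T"
  have "S ** D + D ** T = S ** S - T ** T"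
    by (simp add: D_def matrix_diff_ldistrib matrix_diff_rdistrib)
  then have "inner D (S ** S - T ** T) = inner D (S ** D) + inner D (D ** T)"
    by (simp flip: inner_add_right)
  moreover have "0 \<le> inner D (S ** D)"
    unfolding inner_matrix_mult_left by (intro sum_nonneg pos_def_mat_nonneg[OF S])
  moreover have "inner D D \<le> inner D (D ** T)"
    unfolding inner_matrix_mult_right inner_vec_def[of D D]
    by (intro sum_mono) (simp add: T flip: power2_norm_eq_inner)
  ultimately have "inner D D \<le> inner D (S ** S - T ** T)"
    by linarith
  also have "\<dots> \<le> norm D * norm (S ** S - T ** T)"
    by (rule Cauchy_Schwarz_ineq2[THEN abs_le_D1])
  finally have "norm D * norm D \<le> norm (S ** S - T ** T) * norm D"
    by (simp add: norm_eq_sqrt_inner mult.commute)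
  then show ?thesis
    by (cases "norm D = 0") (simp_all add: D_def)
qed

lemma symmetric_perturbed_identity:
  "transpose A = A \<Longrightarrow> transpose B = B \<Longrightarrow>
    transpose (mat 1 + (2 * g) *\<^sub>R A + g\<^sup>2 *\<^sub>R B) = mat 1 + (2 * g) *\<^sub>R A + g\<^sup>2 *\<^sub>R (B::real^'n^'n)"
  by (simp add: transpose_add transpose_scalar)

lemma quadratic_form_perturbed_identity_ge:
  assumes "\<And>x. 0 \<le> inner x (A *v x)" "\<And>x. 0 \<le> inner x (B *v x)" "0 \<le> g"
  shows "(norm x)\<^sup>2 \<le> inner x ((mat 1 + (2 * g) *\<^sub>R A + g\<^sup>2 *\<^sub>R B) *v (x::real^'n))"
  using assms(1)[of x] assms(2)[of x] \<open>0 \<le> g\<close>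
  by (simp add: matrix_vector_mult_add_rdistrib scaleR_matrix_vector_mult inner_add_right
      power2_norm_eq_inner)

text \<open>The expansion \<open>(1 + 2gA + g\<^sup>2B)\<^sup>-\<^sup>1\<^sup>/\<^sup>2 = 1 - gA + O(g\<^sup>2)\<close>: the square root \<open>S\<close> is
  \<open>1 + gA + O(g\<^sup>2)\<close> by \<open>norm_sub_le_of_square_sub\<close>, and \<open>S\<^sup>-\<^sup>1 - (1 - gA) = S\<^sup>-\<^sup>1 (1 - S (1 - gA))\<close>
  where \<open>S\<^sup>-\<^sup>1\<close> is a contraction.\<close>

context
  fixes A B :: "real^'n^'n" and g :: real
  assumes A: "transpose A = A" "\<And>x. 0 \<le> inner x (A *v x)"
    and B: "transpose B = B" "\<And>x. 0 \<le> inner x (B *v x)" and "0 \<le> g"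
begin

private lemmas perturbed_identity_sym = symmetric_perturbed_identity[OF A(1) B(1), of g]
private lemmas perturbed_identity_ge = quadratic_form_perturbed_identity_ge[OF A(2) B(2) \<open>0 \<le> g\<close>]

lemma norm_mat_sqrt_sub_first_order_le:
  "norm (mat_sqrt (mat 1 + (2 * g) *\<^sub>R A + g\<^sup>2 *\<^sub>R B) - (mat 1 + g *\<^sub>R A))
    \<le> g\<^sup>2 * (norm B + (norm A)\<^sup>2)"
proof -
  define S where "S = mat_sqrt (mat 1 + (2 * g) *\<^sub>R A + g\<^sup>2 *\<^sub>R B)"
  have "norm (S - (mat 1 + g *\<^sub>R A)) \<le> norm (S ** S - (mat 1 + g *\<^sub>R A) ** (mat 1 + g *\<^sub>R A))"
    unfolding S_def
  proof (rule norm_sub_le_of_square_sub[OF mat_sqrt(1)[OF perturbed_identity_sym perturbed_identity_ge]])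
    show "(norm x)\<^sup>2 \<le> inner x ((mat 1 + g *\<^sub>R A) *v x)" for x
      using A(2)[of x] \<open>0 \<le> g\<close>
      by (simp add: matrix_vector_mult_add_rdistrib scaleR_matrix_vector_mult
          inner_add_right power2_norm_eq_inner)
  qed
  also have "S ** S - (mat 1 + g *\<^sub>R A) ** (mat 1 + g *\<^sub>R A) = g\<^sup>2 *\<^sub>R (B - A ** A)"
  proof -
    have "A * 2 = 2 *\<^sub>R A" by (simp add: vec_eq_iff)
    then show ?thesis
      unfolding S_def mat_sqrt(2)[OF perturbed_identity_sym perturbed_identity_ge]
      by (simp add: matrix_arith_simps algebra_simps power2_eq_square)
  qed
  also have "norm (g\<^sup>2 *\<^sub>R (B - A ** A)) \<le> g\<^sup>2 * (norm B + (norm A)\<^sup>2)"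
    using norm_triangle_ineq4[of B "A ** A"] norm_matrix_mult_le[of A A]
    by (simp add: mult_left_mono power2_eq_square)
  finally show ?thesis by (simp add: S_def)
qed

lemma norm_mat_inv_sqrt_sub_first_order_le:
  "norm (mat_inv_sqrt (mat 1 + (2 * g) *\<^sub>R A + g\<^sup>2 *\<^sub>R B) - (mat 1 - g *\<^sub>R A))
    \<le> g\<^sup>2 * ((norm A)\<^sup>2 + (norm B + (norm A)\<^sup>2) * norm (mat 1 - g *\<^sub>R A))"
proof -
  define S where "S = mat_sqrt (mat 1 + (2 * g) *\<^sub>R A + g\<^sup>2 *\<^sub>R B)"
  define R where "R = mat_inv_sqrt (mat 1 + (2 * g) *\<^sub>R A + g\<^sup>2 *\<^sub>R B)"
  define T where "T = mat 1 - g *\<^sub>R A"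
  define D where "D = S - (mat 1 + g *\<^sub>R A)"
  have "R - T = R ** (mat 1 - S ** T)"
    by (simp add: R_def S_def matrix_diff_ldistrib matrix_mul_assoc mat_inv_sqrt_inverse[OF perturbed_identity_sym perturbed_identity_ge])
  also have "mat 1 - S ** T = g\<^sup>2 *\<^sub>R (A ** A) - D ** T"
    by (simp add: D_def T_def matrix_arith_simps algebra_simps power2_eq_square)
  finally have "norm (R - T) \<le> 1 * norm (g\<^sup>2 *\<^sub>R (A ** A) - D ** T)"
    by (metis norm_matrix_mult_le_bounded_left norm_mat_inv_sqrt_le[OF perturbed_identity_sym perturbed_identity_ge]
        R_def mult_1 zero_le_one)
  also have "\<dots> \<le> g\<^sup>2 * (norm A)\<^sup>2 + norm D * norm T"
    using norm_triangle_ineq4[of "g\<^sup>2 *\<^sub>R (A ** A)" "D ** T"] norm_matrix_mult_le[of D T]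
      mult_left_mono[OF norm_matrix_mult_le[of A A] zero_le_power2[of g]]
    by (simp add: power2_eq_square)
  also have "\<dots> \<le> g\<^sup>2 * (norm A)\<^sup>2 + g\<^sup>2 * (norm B + (norm A)\<^sup>2) * norm T"
    using norm_mat_sqrt_sub_first_order_le by (simp add: D_def S_def mult_right_mono)
  finally show ?thesis by (simp add: R_def T_def algebra_simps)
qed

end

definition sym_gram :: "real^'k^'d \<Rightarrow> real^'k^'d \<Rightarrow> real^'k^'k" where
  "sym_gram X Y = (1/2) *\<^sub>R (transpose X ** Y + transpose Y ** X)"

lemma sym_gram_symmetric: "transpose (sym_gram X Y) = sym_gram X Y"
  by (simp add: sym_gram_def matrix_arith_simps algebra_simps)

lemma quadratic_form_transpose_mult:
  "inner x ((transpose X ** Y) *v x) = inner (X *v x) ((Y::real^'k^'d) *v x)"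
  by (simp add: inner_matrix_vector_mult matrix_vector_mul_assoc)

lemma quadratic_form_sym_gram: "inner x (sym_gram X Y *v x) = inner (X *v x) (Y *v x)"
  by (simp add: sym_gram_def scaleR_matrix_vector_mult matrix_vector_mult_add_rdistrib
      inner_add_right quadratic_form_transpose_mult inner_commute)

lemma norm_sym_gram_le: "norm (sym_gram X Y) \<le> norm X * norm Y"
proof -
  have "norm (sym_gram X Y) \<le> (1/2) * (norm (transpose X ** Y) + norm (transpose Y ** X))"
    by (simp add: sym_gram_def norm_triangle_ineq)
  also have "\<dots> \<le> (1/2) * (norm X * norm Y + norm Y * norm X)"
    using norm_matrix_mult_le[of "transpose X" Y] norm_matrix_mult_le[of "transpose Y" X]
    by (simp add: norm_transpose mult.commute)
  finally show ?thesis by simp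
qed

lemma quadratic_form_gram: "inner x ((transpose Y ** Y) *v x) = (norm ((Y::real^'k^'d) *v x))\<^sup>2"
  by (simp add: quadratic_form_transpose_mult power2_norm_eq_inner)

lemma gram_add_scaleR:
  assumes "transpose (X::real^'k^'d) ** X = mat 1"
  shows "transpose (X + g *\<^sub>R Y) ** (X + g *\<^sub>R Y)
    = mat 1 + (2 * g) *\<^sub>R sym_gram X Y + g\<^sup>2 *\<^sub>R (transpose Y ** Y)"
  using assms by (simp add: sym_gram_def matrix_arith_simps algebra_simps power2_eq_square)

lemma norm_sym_gram_orthonormal_le:
  assumes "transpose (X::real^'k^'d) ** X = mat 1" "norm Y \<le> b"
  shows "norm (sym_gram X Y) \<le> sqrt (real CARD('k)) * b"
proof -
  have "norm (sym_gram X Y) \<le> sqrt (real CARD('k)) * norm Y"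
    using norm_sym_gram_le[of X Y] by (simp add: norm_orthonormal_columns[OF assms(1)])
  also have "\<dots> \<le> sqrt (real CARD('k)) * b"
    using assms(2) by (simp add: mult_left_mono)
  finally show ?thesis .
qed

definition inv_sqrt_remainder_bound :: "real \<Rightarrow> real \<Rightarrow> real \<Rightarrow> real" where
  "inv_sqrt_remainder_bound s b c = (s * b)\<^sup>2 + (b\<^sup>2 + (s * b)\<^sup>2) * (s + c * (s * b))"

definition retr_remainder_bound :: "real \<Rightarrow> real \<Rightarrow> real \<Rightarrow> real" where
  "retr_remainder_bound s b c = (s + c * b) * inv_sqrt_remainder_bound s b c + b * (s * b)"

context
  fixes X Y :: "real^'k^'d" and g :: real
  assumes orth: "transpose X ** X = mat 1" and "0 \<le> g"
    and monotone: "\<And>x. 0 \<le> inner (X *v x) (Y *v x)"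
begin

private lemma sym_gram_nonneg: "0 \<le> inner x (sym_gram X Y *v x)"
  by (simp add: quadratic_form_sym_gram monotone)

private lemma gram_nonneg: "0 \<le> inner x ((transpose Y ** Y) *v x)"
  by (simp add: quadratic_form_gram)

private lemma gram_symmetric: "transpose (transpose Y ** Y) = transpose Y ** Y"
  by (simp add: matrix_transpose_mul)

private lemmas gram_expansion_sym = symmetric_perturbed_identity[OF sym_gram_symmetric gram_symmetric, of g]
private lemmas gram_expansion_ge =
  quadratic_form_perturbed_identity_ge[OF sym_gram_nonneg gram_nonneg \<open>0 \<le> g\<close>]

lemma retr_orthonormal: "transpose (retr X (g *\<^sub>R Y)) ** retr X (g *\<^sub>R Y) = mat 1"
proof -
  define G where "G = transpose (X + g *\<^sub>R Y) ** (X + g *\<^sub>R Y)"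
  have G: "G = mat 1 + (2 * g) *\<^sub>R sym_gram X Y + g\<^sup>2 *\<^sub>R (transpose Y ** Y)"
    by (simp add: G_def gram_add_scaleR[OF orth])
  have "transpose (retr X (g *\<^sub>R Y)) ** retr X (g *\<^sub>R Y)
      = transpose (mat_inv_sqrt G) ** G ** mat_inv_sqrt G"
    unfolding retr_def G_def by (simp add: matrix_transpose_mul matrix_mul_assoc)
  also have "transpose (mat_inv_sqrt G) = mat_inv_sqrt G"
    using mat_inv_sqrt_symmetric[OF gram_expansion_sym gram_expansion_ge] by (simp add: G)
  finally show ?thesis
    using mat_inv_sqrt_congruence[OF gram_expansion_sym gram_expansion_ge] by (simp add: G)
qed

lemma norm_mat_inv_sqrt_gram_sub_le:
  assumes "g \<le> c" and "norm Y \<le> b"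
  shows "norm (mat_inv_sqrt (mat 1 + (2 * g) *\<^sub>R sym_gram X Y + g\<^sup>2 *\<^sub>R (transpose Y ** Y))
      - (mat 1 - g *\<^sub>R sym_gram X Y))
    \<le> g\<^sup>2 * inv_sqrt_remainder_bound (sqrt (real CARD('k))) b c"
proof -
  define s where "s = sqrt (real CARD('k))"
  have "0 \<le> b" using assms(2) norm_ge_zero order_trans by blast
  have norm_A: "norm (sym_gram X Y) \<le> s * b"
    unfolding s_def by (rule norm_sym_gram_orthonormal_le[OF orth assms(2)])
  have norm_gram: "norm (transpose Y ** Y) \<le> b\<^sup>2"
    using norm_matrix_mult_le[of "transpose Y" Y] mult_mono[OF assms(2) assms(2)] \<open>0 \<le> b\<close>
    by (simp add: norm_transpose power2_eq_square)
  have "norm (mat 1 - g *\<^sub>R sym_gram X Y) \<le> norm (mat 1 :: real^'k^'k) + g * norm (sym_gram X Y)"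
    using norm_triangle_ineq4[of "mat 1" "g *\<^sub>R sym_gram X Y"] \<open>0 \<le> g\<close> by simp
  also have "\<dots> \<le> s + c * (s * b)"
    using norm_orthonormal_columns[of "mat 1 :: real^'k^'k"] norm_A \<open>0 \<le> g\<close> assms(1)
    by (intro add_mono mult_mono) (auto simp: s_def)
  finally have norm_T: "norm (mat 1 - g *\<^sub>R sym_gram X Y) \<le> s + c * (s * b)" .
  show ?thesis
    using norm_mat_inv_sqrt_sub_first_order_le[OF sym_gram_symmetric sym_gram_nonneg
        gram_symmetric gram_nonneg \<open>0 \<le> g\<close>] norm_A norm_gram norm_T
    unfolding inv_sqrt_remainder_bound_def s_def[symmetric]
    by (elim order_trans) (intro mult_left_mono add_mono mult_mono power_mono; simp)
qed

lemma norm_retr_sub_first_order_le: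
  assumes "g \<le> c" and "norm Y \<le> b"
  shows "norm (retr X (g *\<^sub>R Y) - (X + g *\<^sub>R (Y - X ** sym_gram X Y)))
    \<le> g\<^sup>2 * retr_remainder_bound (sqrt (real CARD('k))) b c"
proof -
  define s where "s = sqrt (real CARD('k))"
  define A where "A = sym_gram X Y"
  define E where "E = mat_inv_sqrt (mat 1 + (2 * g) *\<^sub>R A + g\<^sup>2 *\<^sub>R (transpose Y ** Y))
    - (mat 1 - g *\<^sub>R A)"
  have "retr X (g *\<^sub>R Y) = (X + g *\<^sub>R Y) ** (mat 1 - g *\<^sub>R A + E)"
    unfolding retr_def gram_add_scaleR[OF orth] E_def A_def by simp
  then have expansion: "retr X (g *\<^sub>R Y) - (X + g *\<^sub>R (Y - X ** A))
      = (X + g *\<^sub>R Y) ** E - g\<^sup>2 *\<^sub>R (Y ** A)"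
    by (simp add: matrix_arith_simps algebra_simps power2_eq_square)
  have "0 \<le> b" using assms(2) norm_ge_zero order_trans by blast
  have "0 \<le> c" "0 \<le> s" using assms(1) \<open>0 \<le> g\<close> by (auto simp: s_def)
  have norm_W: "norm (X + g *\<^sub>R Y) \<le> s + c * b"
    using norm_triangle_ineq[of X "g *\<^sub>R Y"] mult_mono[OF assms] \<open>0 \<le> g\<close> \<open>0 \<le> c\<close>
    by (simp add: s_def norm_orthonormal_columns[OF orth])
  have "norm ((X + g *\<^sub>R Y) ** E - g\<^sup>2 *\<^sub>R (Y ** A))
      \<le> norm (X + g *\<^sub>R Y) * norm E + g\<^sup>2 * (norm Y * norm A)"
    using norm_triangle_ineq4[of "(X + g *\<^sub>R Y) ** E" "g\<^sup>2 *\<^sub>R (Y ** A)"]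
      norm_matrix_mult_le[of "X + g *\<^sub>R Y" E]
      mult_left_mono[OF norm_matrix_mult_le[of Y A] zero_le_power2[of g]]
    by simp
  also have "\<dots> \<le> (s + c * b) * (g\<^sup>2 * inv_sqrt_remainder_bound s b c) + g\<^sup>2 * (b * (s * b))"
    using norm_W norm_mat_inv_sqrt_gram_sub_le[OF assms] assms(2) \<open>0 \<le> b\<close> \<open>0 \<le> c\<close> \<open>0 \<le> s\<close>
      norm_sym_gram_orthonormal_le[OF orth assms(2)]
    by (intro add_mono mult_mono mult_left_mono) (auto simp: E_def A_def s_def)
  also have "\<dots> = g\<^sup>2 * retr_remainder_bound s b c"
    by (simp add: retr_remainder_bound_def algebra_simps)
  finally show ?thesis
    unfolding A_def[symmetric] s_def[symmetric] expansion .
qed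

end

section \<open>Riemannian SGD and the randomized power method\<close>

lemma norm_orthogonal_complement_le:
  assumes orth: "transpose (X::real^'k^'d) ** X = mat 1"
  shows "norm ((mat 1 - X ** transpose X) *v v) \<le> norm v"
proof -
  define P where "P = mat 1 - X ** transpose X"
  have "X ** transpose X ** (X ** transpose X) = X ** transpose X"
    by (metis matrix_mul_assoc matrix_mul_rid orth)
  then have "transpose P ** P = P"
    by (simp add: P_def transpose_diff matrix_transpose_mul matrix_diff_ldistrib matrix_diff_rdistrib)
  then have "(norm (P *v v))\<^sup>2 = inner v (P *v v)"
    using quadratic_form_gram[of v P] by simp
  also have "\<dots> = inner v v - inner (X *v (transpose X *v v)) v"
    by (simp add: P_def matrix_vector_mult_diff_rdistrib inner_diff_right matrix_vector_mul_assoc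
        inner_commute del: transpose_matrix_vector)
  also have "\<dots> = (norm v)\<^sup>2 - (norm (transpose X *v v))\<^sup>2"
    by (simp only: inner_matrix_vector_mult power2_norm_eq_inner)
  finally show ?thesis
    unfolding P_def[symmetric] by (simp add: power2_le_imp_le)
qed

lemma sym_gram_orthogonal_complement:
  assumes "transpose (X::real^'k^'d) ** X = mat 1"
  shows "sym_gram X ((mat 1 - X ** transpose X) ** Z) = 0"
proof -
  have "transpose X ** ((mat 1 - X ** transpose X) ** Z) = 0"
    by (simp add: matrix_diff_ldistrib matrix_diff_rdistrib matrix_mul_assoc assms)
  moreover have "transpose ((mat 1 - X ** transpose X) ** Z) ** X
      = transpose (transpose X ** ((mat 1 - X ** transpose X) ** Z))"
    by (simp add: matrix_transpose_mul)
  ultimately show ?thesis by (simp add: sym_gram_def)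
qed

lemma sym_gram_symmetric_mult:
  assumes "transpose H = H"
  shows "sym_gram X (H ** X) = transpose X ** H ** X"
proof -
  have "transpose (H ** X) ** X = transpose X ** H ** X"
    by (simp add: matrix_transpose_mul assms matrix_mul_assoc)
  then show ?thesis by (simp add: sym_gram_def matrix_mul_assoc scaleR_half_double)
qed

lemma norm_matrix_mult_le_of_spec_norm_le:
  assumes "spec_norm (H::real^'d^'d) \<le> 1"
  shows "norm (H ** N) \<le> norm (N::real^'k^'d)"
proof -
  have "norm (H *v x) \<le> 1 * norm x" for x
    using norm_matrix_vector_le_spec_norm[of H x] assms
    by (meson mult_right_mono norm_ge_zero order_trans)
  then show ?thesis using norm_matrix_mult_le_bounded_left[of H 1 N] by simp
qed

lemma oja_retraction_step:
  fixes X :: "real^'k^'d" and H :: "real^'d^'d"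
  assumes orth: "transpose X ** X = mat 1" and "0 \<le> g" "g \<le> c"
    and H: "pos_def_mat H" "spec_norm H \<le> 1"
    and update: "X' = retr X (g *\<^sub>R ((mat 1 - X ** transpose X) ** H ** X))
      \<or> X' = retr X (g *\<^sub>R (H ** X))"
  shows "transpose X' ** X' = mat 1"
    and "norm (X' - X - g *\<^sub>R ((mat 1 - X ** transpose X) ** H ** X))
      \<le> g\<^sup>2 * retr_remainder_bound (sqrt (real CARD('k))) (sqrt (real CARD('k))) c"
proof -
  define s where "s = sqrt (real CARD('k))"
  define P where "P = mat 1 - X ** transpose X"
  have norm_HX: "norm (H ** X) \<le> s"
    using norm_matrix_mult_le_of_spec_norm_le[OF H(2), of X]
    by (simp add: s_def norm_orthonormal_columns[OF orth])
  have sym_gram_P: "sym_gram X (P ** H ** X) = 0"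
    using sym_gram_orthogonal_complement[OF orth, of "H ** X"] by (simp add: P_def matrix_mul_assoc)
  have norm_PHX: "norm (P ** H ** X) \<le> s"
    using norm_matrix_mult_le_bounded_left[of P 1 "H ** X"] norm_orthogonal_complement_le[OF orth]
      norm_HX
    by (simp add: P_def matrix_mul_assoc)
  have monotone_PHX: "0 \<le> inner (X *v x) ((P ** H ** X) *v x)" for x
    using quadratic_form_sym_gram[of x X "P ** H ** X"] by (simp add: sym_gram_P)
  have monotone_HX: "0 \<le> inner (X *v x) ((H ** X) *v x)" for x
    using pos_def_mat_nonneg[OF H(1), of "X *v x"]
    by (simp add: inner_matrix_vector_mult matrix_vector_mul_assoc del: transpose_matrix_vector)
  have HX: "H ** X - X ** sym_gram X (H ** X) = P ** H ** X"
    by (simp add: P_def sym_gram_symmetric_mult[OF pos_def_mat_symmetric[OF H(1)]]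
        matrix_diff_rdistrib matrix_mul_assoc)
  from update have "transpose X' ** X' = mat 1
      \<and> norm (X' - (X + g *\<^sub>R (P ** H ** X))) \<le> g\<^sup>2 * retr_remainder_bound s s c"
    unfolding P_def[symmetric]
  proof
    assume "X' = retr X (g *\<^sub>R (P ** H ** X))"
    then show ?thesis
      using retr_orthonormal[OF orth \<open>0 \<le> g\<close> monotone_PHX]
        norm_retr_sub_first_order_le[OF orth \<open>0 \<le> g\<close> monotone_PHX \<open>g \<le> c\<close> norm_PHX]
      by (simp add: sym_gram_P s_def)
  next
    assume "X' = retr X (g *\<^sub>R (H ** X))"
    then show ?thesis
      using retr_orthonormal[OF orth \<open>0 \<le> g\<close> monotone_HX]
        norm_retr_sub_first_order_le[OF orth \<open>0 \<le> g\<close> monotone_HX \<open>g \<le> c\<close> norm_HX]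
      by (simp only: HX s_def)
  qed
  then show "transpose X' ** X' = mat 1"
    and "norm (X' - X - g *\<^sub>R ((mat 1 - X ** transpose X) ** H ** X))
      \<le> g\<^sup>2 * retr_remainder_bound (sqrt (real CARD('k))) (sqrt (real CARD('k))) c"
    by (simp_all add: P_def s_def diff_diff_eq)
qed

lemma oja_iterates:
  fixes X :: "nat \<Rightarrow> real^'k^'d" and H :: "nat \<Rightarrow> real^'d^'d"
  assumes "transpose (X 0) ** X 0 = mat 1"
    and H: "\<And>n. 1 \<le> n \<Longrightarrow> pos_def_mat (H n) \<and> spec_norm (H n) \<le> 1"
    and \<gamma>: "\<And>n. 1 \<le> n \<Longrightarrow> 0 \<le> \<gamma> n \<and> \<gamma> n \<le> C"
    and update: "\<And>n. 1 \<le> n \<Longrightarrow>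
      X n = retr (X (n - 1)) (\<gamma> n *\<^sub>R ((mat 1 - X (n - 1) ** transpose (X (n - 1))) ** H n ** X (n - 1)))
      \<or> X n = retr (X (n - 1)) (\<gamma> n *\<^sub>R (H n ** X (n - 1)))"
  shows "transpose (X n) ** X n = mat 1"
    and "1 \<le> n \<Longrightarrow> norm (X n - X (n - 1)
      - \<gamma> n *\<^sub>R ((mat 1 - X (n - 1) ** transpose (X (n - 1))) ** H n ** X (n - 1)))
      \<le> (\<gamma> n)\<^sup>2 * retr_remainder_bound (sqrt (real CARD('k))) (sqrt (real CARD('k))) C"
proof -
  note step = oja_retraction_step[OF _ conjunct1[OF \<gamma>] conjunct2[OF \<gamma>]
      conjunct1[OF H] conjunct2[OF H] update]
  show orth: "transpose (X n) ** X n = mat 1" for n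
    by (induction n) (use assms(1) step(1) in auto)
  show "1 \<le> n \<Longrightarrow> norm (X n - X (n - 1)
      - \<gamma> n *\<^sub>R ((mat 1 - X (n - 1) ** transpose (X (n - 1))) ** H n ** X (n - 1)))
      \<le> (\<gamma> n)\<^sup>2 * retr_remainder_bound (sqrt (real CARD('k))) (sqrt (real CARD('k))) C"
    by (rule step(2)[OF orth])
qed

lemma retr_remainder_bound_pos: "0 < s \<Longrightarrow> 0 \<le> c \<Longrightarrow> 0 < retr_remainder_bound s s c"
  unfolding retr_remainder_bound_def inv_sqrt_remainder_bound_def
  by (intro add_nonneg_pos mult_nonneg_nonneg) auto

lemma step_size_bounds:
  assumes "1 \<le> n" "0 \<le> \<alpha>" "0 < C"
  shows "0 \<le> C * real n powr (- \<alpha>) \<and> C * real n powr (- \<alpha>) \<le> C"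
proof -
  have "1 \<le> real n powr \<alpha>" using assms(1,2) by (simp add: ge_one_powr_ge_zero)
  then have "real n powr (- \<alpha>) \<le> 1" by (simp add: powr_minus inverse_le_1_iff)
  then show ?thesis using assms(3) by (simp add: mult_le_cancel_left1)
qed

theorem lemma10:
  fixes M :: "'w measure"
    and H :: "nat \<Rightarrow> 'w \<Rightarrow> real^'d^'d"
    and X :: "nat \<Rightarrow> 'w \<Rightarrow> real^'k^'d"
    and X0 :: "real^'k^'d"
    and \<gamma> :: "nat \<Rightarrow> real"
    and C \<alpha> :: real
  assumes "prob_space M"
    and "AE \<omega> in M. \<forall>n\<ge>1. pos_def_mat (H n \<omega>) \<and> spec_norm (H n \<omega>) \<le> 1"
    and "C > 0" and "1/2 < \<alpha>" and "\<alpha> < 1"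
    and "\<And>n. n \<ge> 1 \<Longrightarrow> \<gamma> n = C * real n powr (- \<alpha>)"
    and "transpose X0 ** X0 = mat 1"
    and "\<And>\<omega>. X 0 \<omega> = X0"
    and "(\<forall>\<omega> n. n \<ge> 1 \<longrightarrow> X n \<omega> = retr (X (n - 1) \<omega>)
            (\<gamma> n *\<^sub>R ((mat 1 - X (n - 1) \<omega> ** transpose (X (n - 1) \<omega>)) ** H n \<omega> ** X (n - 1) \<omega>)))
       \<or> (\<forall>\<omega> n. n \<ge> 1 \<longrightarrow> X n \<omega> = retr (X (n - 1) \<omega>) (\<gamma> n *\<^sub>R (H n \<omega> ** X (n - 1) \<omega>)))"
  shows "\<exists>c>0. AE \<omega> in M. \<forall>n\<ge>1.
           frob_norm (X n \<omega> - X (n - 1) \<omega>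
             - \<gamma> n *\<^sub>R ((mat 1 - X (n - 1) \<omega> ** transpose (X (n - 1) \<omega>)) ** H n \<omega> ** X (n - 1) \<omega>))
           \<le> c * (\<gamma> n)\<^sup>2"
proof -
  define c where "c = retr_remainder_bound (sqrt (real CARD('k))) (sqrt (real CARD('k))) C"
  define err where "err n \<omega> = X n \<omega> - X (n - 1) \<omega>
    - \<gamma> n *\<^sub>R ((mat 1 - X (n - 1) \<omega> ** transpose (X (n - 1) \<omega>)) ** H n \<omega> ** X (n - 1) \<omega>)"
    for n \<omega>
  have \<gamma>: "0 \<le> \<gamma> n \<and> \<gamma> n \<le> C" if "1 \<le> n" for n
    using step_size_bounds[OF that _ \<open>C > 0\<close>] assms(4) assms(6)[OF that] by simp
  have "norm (err n \<omega>) \<le> c * (\<gamma> n)\<^sup>2"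
    if H: "\<forall>n\<ge>1. pos_def_mat (H n \<omega>) \<and> spec_norm (H n \<omega>) \<le> 1" and "1 \<le> n" for n \<omega>
  proof -
    have "transpose (X 0 \<omega>) ** X 0 \<omega> = mat 1" using assms(7,8) by simp
    moreover have "X m \<omega> = retr (X (m - 1) \<omega>)
        (\<gamma> m *\<^sub>R ((mat 1 - X (m - 1) \<omega> ** transpose (X (m - 1) \<omega>)) ** H m \<omega> ** X (m - 1) \<omega>))
      \<or> X m \<omega> = retr (X (m - 1) \<omega>) (\<gamma> m *\<^sub>R (H m \<omega> ** X (m - 1) \<omega>))" if "1 \<le> m" for m
      using assms(9) that by blast
    ultimately have "norm (err n \<omega>) \<le> (\<gamma> n)\<^sup>2 * c"
      unfolding err_def c_def using H \<gamma> \<open>1 \<le> n\<close>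
      by (intro oja_iterates(2)[where X="\<lambda>n. X n \<omega>" and H="\<lambda>n. H n \<omega>"]) auto
    then show ?thesis by (simp add: mult.commute)
  qed
  then have "AE \<omega> in M. \<forall>n\<ge>1. frob_norm (err n \<omega>) \<le> c * (\<gamma> n)\<^sup>2"
    using assms(2) by (auto simp: frob_norm_eq_norm elim!: eventually_mono)
  moreover have "c > 0"
    unfolding c_def by (rule retr_remainder_bound_pos) (use \<open>C > 0\<close> in auto)
  ultimately show ?thesis unfolding err_def by blast
qed

end
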